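(* 1. $\nu_+$ does not satisfy $\mathrm{IC}(1)$. 2. $\nu$ does not satisfy $\mathrm{IC}(1)$.
   Context: $\nu_+$ has density $e^{-x}\mathbb{I}_{[0,\infty)}(x)$ and $\nu$ has density $\frac12 e^{-|x|}$. A pair $(\mu,W)$, with $\mu$ a probability measure on $\mathbb{R}^n$ and $W:\mathbb{R}^n\to[0,\infty]$, satisfies property $(\tau)$ if for every bounded function $f$, $\int e^{h}\,d\mu\int e^{-f}\,d\mu\le 1$, where $h(x)=\inf_{y}\{W(x-y)+f(y)\}$ is the infimum convolution of $W$ and $f$. For a measure $\mu$, $\mu'$ is its reflection through the origin, $\overline{\mu}=\mu*\mu'$, $\Lambda_\mu=\ln\int e^{\langle \cdot,y\rangle}d\mu(y)$, and $\Lambda^*_\mu(x)=\sup_y\{\langle x,y\rangle-\Lambda_\mu(y)\}$. A probability measure $\mu$ satisfies $\mathrm{IC}(\beta)$ ($\beta>0$) if the pair $(\mu,\Lambda^*_{\overline{\mu}}(\cdot/\beta))$ satisfies property $(\tau)$. *)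

theory Defs
  imports "HOL-Probability.Probability"
begin

definition exp_ereal :: "ereal \<Rightarrow> ennreal" where
  "exp_ereal t = (if t = \<infinity> then \<infinity> else if t = - \<infinity> then 0 else ennreal (exp (real_of_ereal t)))"

definition ln_ennreal :: "ennreal \<Rightarrow> ereal" where
  "ln_ennreal z = (if z = \<infinity> then \<infinity> else if z = 0 then - \<infinity> else ereal (ln (enn2real z)))"

definition inf_conv :: "('a::real_vector \<Rightarrow> ereal) \<Rightarrow> ('a \<Rightarrow> real) \<Rightarrow> 'a \<Rightarrow> ereal" where
  "inf_conv W f x = (INF y. W (x - y) + ereal (f y))"

definition property_tau :: "('a::euclidean_space) measure \<Rightarrow> ('a \<Rightarrow> ereal) \<Rightarrow> bool" where
  "property_tau \<mu> W \<longleftrightarrow>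
     (\<forall>f :: 'a \<Rightarrow> real. f \<in> borel_measurable borel \<and> bounded (range f) \<longrightarrow>
        (\<integral>\<^sup>+ x. exp_ereal (inf_conv W f x) \<partial>\<mu>) * (\<integral>\<^sup>+ x. ennreal (exp (- f x)) \<partial>\<mu>) \<le> 1)"

definition reflect_measure :: "('a::euclidean_space) measure \<Rightarrow> 'a measure" where
  "reflect_measure \<mu> = distr \<mu> borel uminus"

definition symmetrize :: "('a::ordered_euclidean_space) measure \<Rightarrow> 'a measure" where
  "symmetrize \<mu> = convolution \<mu> (reflect_measure \<mu>)"

definition log_laplace :: "('a::euclidean_space) measure \<Rightarrow> 'a \<Rightarrow> ereal" where
  "log_laplace \<mu> y = ln_ennreal (\<integral>\<^sup>+ x. ennreal (exp (inner x y)) \<partial>\<mu>)"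

definition cramer :: "('a::euclidean_space) measure \<Rightarrow> 'a \<Rightarrow> ereal" where
  "cramer \<mu> x = (SUP y. ereal (inner x y) - log_laplace \<mu> y)"

definition IC :: "('a::ordered_euclidean_space) measure \<Rightarrow> real \<Rightarrow> bool" where
  "IC \<mu> \<beta> \<longleftrightarrow> property_tau \<mu> (\<lambda>x. cramer (symmetrize \<mu>) (x /\<^sub>R \<beta>))"

definition nu_plus :: "real measure" where
  "nu_plus = density lborel (\<lambda>x. ennreal (exp (- x) * indicator {0..} x))"

definition nu_sym :: "real measure" where
  "nu_sym = density lborel (\<lambda>x. ennreal (exp (- \<bar>x\<bar>) / 2))"

end

theory Submission
  imports Defs
begin

text \<open>Under both measures \<open>|x|\<close> has the standard exponential law, and the Laplace
  transform of the symmetrisation is at most \<open>(1 - t\<^sup>2)\<^sup>-\<^sup>2\<close>, so that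
  \<open>\<Lambda>\<^sup>*(z) \<ge> t z + 2 ln (1 - t\<^sup>2)\<close> for every \<open>|t| < 1\<close>.
  For the test function \<open>f(y) = min (5/6 (|y| - ln 10)\<^sub>+, 10\<^sup>1\<^sup>4)\<close> (the cap only makes \<open>f\<close>
  bounded) this gives \<open>h(x) \<ge> t (|x| - ln 10) + 2 ln (1 - t\<^sup>2)\<close> for all \<open>0 \<le> t \<le> 5/6\<close>,
  as long as the right-hand side stays below the cap.
  Taking \<open>t = i/(i+1)\<close> on six consecutive ranges of \<open>|x|\<close> yields
  \<open>\<integral> e\<^sup>h > 1.0494\<close>, while \<open>\<integral> e\<^sup>-\<^sup>f \<ge> 9/10 + 6/110 > 0.9545\<close>;
  the product exceeds 1.\<close>

lemma nn_integral_exp_affine_Icc: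
  fixes r d p q :: real
  assumes "0 < r" "p \<le> q"
  shows "(\<integral>\<^sup>+u. ennreal (exp (d - r * u)) * indicator {p..q} u \<partial>lborel)
    = ennreal ((exp (d - r * p) - exp (d - r * q)) / r)"
proof -
  have "(\<integral>\<^sup>+u. ennreal (exp (d - r * u)) * indicator {p..q} u \<partial>lborel)
      = (- exp (d - r * q) / r) - (- exp (d - r * p) / r)"
    by (rule nn_integral_FTC_Icc) (use assms in \<open>auto intro!: derivative_eq_intros\<close>)
  then show ?thesis by (simp add: diff_divide_distrib)
qed

lemma nn_integral_exp_affine_Ico:
  fixes r d p q :: real
  assumes "0 < r" "p \<le> q"
  shows "(\<integral>\<^sup>+u. ennreal (exp (d - r * u)) * indicator {p..<q} u \<partial>lborel)
    = ennreal ((exp (d - r * p) - exp (d - r * q)) / r)"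
proof -
  have "(\<integral>\<^sup>+u. ennreal (exp (d - r * u)) * indicator {p..<q} u \<partial>lborel)
      = (\<integral>\<^sup>+u. ennreal (exp (d - r * u)) * indicator {p..q} u \<partial>lborel)"
    by (rule nn_integral_cong_AE) (use AE_lborel_singleton[of q] in \<open>auto split: split_indicator\<close>)
  then show ?thesis using nn_integral_exp_affine_Icc[OF assms] by simp
qed

lemma nn_integral_exp_affine_atLeast:
  fixes r d p :: real
  assumes "0 < r"
  shows "(\<integral>\<^sup>+u. ennreal (exp (d - r * u)) * indicator {p..} u \<partial>lborel) = ennreal (exp (d - r * p) / r)"
proof -
  have "(\<integral>\<^sup>+u. ennreal (exp (d - r * u)) * indicator {p..} u \<partial>lborel) = 0 - (- exp (d - r * p) / r)"
  proof (rule nn_integral_FTC_atLeast)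
    have "((\<lambda>u. exp (- (r * u))) \<longlongrightarrow> 0) at_top"
      by (rule filterlim_compose[OF exp_at_bot], rule filterlim_compose[OF filterlim_uminus_at_bot_at_top],
          rule filterlim_tendsto_pos_mult_at_top[OF tendsto_const assms filterlim_ident])
    then have "((\<lambda>u. - (exp d * exp (- (r * u))) / r) \<longlongrightarrow> - (exp d * 0) / r) at_top"
      using assms by (intro tendsto_intros) auto
    then show "((\<lambda>u. - exp (d - r * u) / r) \<longlongrightarrow> 0) at_top"
      by (simp add: mult_exp_exp)
  qed (use assms in \<open>auto intro!: derivative_eq_intros\<close>)
  then show ?thesis by simp
qed

lemma nn_integral_lborel_fold:
  fixes g :: "real \<Rightarrow> ennreal"
  assumes [measurable]: "g \<in> borel_measurable borel"
  shows "(\<integral>\<^sup>+x. g x \<partial>lborel) = (\<integral>\<^sup>+x. (g x + g (- x)) * indicator {0..} x \<partial>lborel)"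
proof -
  have "(\<integral>\<^sup>+x. g x \<partial>lborel) = (\<integral>\<^sup>+x. g x * indicator {0..} x + g x * indicator {..<0} x \<partial>lborel)"
    by (intro nn_integral_cong) (auto split: split_indicator)
  also have "\<dots> = (\<integral>\<^sup>+x. g x * indicator {0..} x \<partial>lborel) + (\<integral>\<^sup>+x. g x * indicator {..<0} x \<partial>lborel)"
    by (intro nn_integral_add) auto
  also have "(\<integral>\<^sup>+x. g x * indicator {..<0} x \<partial>lborel) = (\<integral>\<^sup>+x. g x * indicator {..<0} x \<partial>distr lborel borel uminus)"
    by (simp add: lborel_distr_uminus)
  also have "\<dots> = (\<integral>\<^sup>+x. g (- x) * indicator {..<0} (- x) \<partial>lborel)"
    by (subst nn_integral_distr) auto
  also have "\<dots> = (\<integral>\<^sup>+x. g (- x) * indicator {0..} x \<partial>lborel)"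
    by (rule nn_integral_cong_AE) (use AE_lborel_singleton[of 0] in \<open>auto split: split_indicator\<close>)
  also have "(\<integral>\<^sup>+x. g x * indicator {0..} x \<partial>lborel) + \<dots>
      = (\<integral>\<^sup>+x. g x * indicator {0..} x + g (- x) * indicator {0..} x \<partial>lborel)"
    by (intro nn_integral_add[symmetric]) auto
  finally show ?thesis by (simp add: distrib_right)
qed

lemma laplace_symmetrize:
  fixes \<mu> :: "real measure"
  assumes "finite_measure \<mu>" and [measurable_cong]: "sets \<mu> = sets borel"
  shows "(\<integral>\<^sup>+x. ennreal (exp (x * t)) \<partial>symmetrize \<mu>)
    = (\<integral>\<^sup>+x. ennreal (exp (x * t)) \<partial>\<mu>) * (\<integral>\<^sup>+y. ennreal (exp (y * - t)) \<partial>\<mu>)"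
proof -
  have "finite_measure (reflect_measure \<mu>)"
    unfolding reflect_measure_def using assms by (intro finite_measure.finite_measure_distr) auto
  moreover have "sets (reflect_measure \<mu>) = sets borel" by (simp add: reflect_measure_def)
  ultimately have "(\<integral>\<^sup>+x. ennreal (exp (x * t)) \<partial>symmetrize \<mu>)
      = (\<integral>\<^sup>+x. \<integral>\<^sup>+y. ennreal (exp ((x + y) * t)) \<partial>reflect_measure \<mu> \<partial>\<mu>)"
    unfolding symmetrize_def using assms by (subst nn_integral_convolution) auto
  also have "\<dots> = (\<integral>\<^sup>+x. ennreal (exp (x * t)) * (\<integral>\<^sup>+y. ennreal (exp (y * - t)) \<partial>\<mu>) \<partial>\<mu>)"
  proof (intro nn_integral_cong)
    fix x
    have "(\<integral>\<^sup>+y. ennreal (exp ((x + y) * t)) \<partial>reflect_measure \<mu>) = (\<integral>\<^sup>+y. ennreal (exp ((x + - y) * t)) \<partial>\<mu>)"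
      unfolding reflect_measure_def by (subst nn_integral_distr) auto
    also have "\<dots> = (\<integral>\<^sup>+y. ennreal (exp (x * t)) * ennreal (exp (y * - t)) \<partial>\<mu>)"
      by (intro nn_integral_cong) (simp add: ennreal_mult'[symmetric] mult_exp_exp algebra_simps)
    finally show "(\<integral>\<^sup>+y. ennreal (exp ((x + y) * t)) \<partial>reflect_measure \<mu>)
        = ennreal (exp (x * t)) * (\<integral>\<^sup>+y. ennreal (exp (y * - t)) \<partial>\<mu>)"
      by (simp add: nn_integral_cmult)
  qed
  also have "\<dots> = (\<integral>\<^sup>+x. ennreal (exp (x * t)) \<partial>\<mu>) * (\<integral>\<^sup>+y. ennreal (exp (y * - t)) \<partial>\<mu>)"
    by (rule nn_integral_multc) auto
  finally show ?thesis .
qed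

locale abs_exponential =
  fixes \<mu> :: "real measure"
  assumes sets_eq [measurable_cong]: "sets \<mu> = sets borel"
    and nn_integral_abs: "\<And>G. G \<in> borel_measurable borel \<Longrightarrow>
      (\<integral>\<^sup>+x. G \<bar>x\<bar> \<partial>\<mu>) = (\<integral>\<^sup>+u. ennreal (exp (- u)) * indicator {0..} u * G u \<partial>lborel)"

lemma sets_nu_plus [simp, measurable_cong]: "sets nu_plus = sets borel"
  by (simp add: nu_plus_def)

lemma sets_nu_sym [simp, measurable_cong]: "sets nu_sym = sets borel"
  by (simp add: nu_sym_def)

interpretation nu_plus: abs_exponential nu_plus
proof
  fix G :: "real \<Rightarrow> ennreal"
  assume [measurable]: "G \<in> borel_measurable borel"
  show "(\<integral>\<^sup>+x. G \<bar>x\<bar> \<partial>nu_plus) = (\<integral>\<^sup>+u. ennreal (exp (- u)) * indicator {0..} u * G u \<partial>lborel)"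
    unfolding nu_plus_def
    by (subst nn_integral_density) (auto intro!: nn_integral_cong simp: ennreal_mult' split: split_indicator)
qed simp

lemma nn_integral_nu_sym:
  fixes F :: "real \<Rightarrow> ennreal"
  assumes [measurable]: "F \<in> borel_measurable borel"
  shows "(\<integral>\<^sup>+x. F x \<partial>nu_sym) = (\<integral>\<^sup>+u. ennreal (exp (- u) / 2) * (F u + F (- u)) * indicator {0..} u \<partial>lborel)"
proof -
  have "(\<integral>\<^sup>+x. F x \<partial>nu_sym) = (\<integral>\<^sup>+x. ennreal (exp (- \<bar>x\<bar>) / 2) * F x \<partial>lborel)"
    unfolding nu_sym_def by (subst nn_integral_density) auto
  also have "\<dots> = (\<integral>\<^sup>+u. (ennreal (exp (- \<bar>u\<bar>) / 2) * F u + ennreal (exp (- \<bar>- u\<bar>) / 2) * F (- u))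
      * indicator {0..} u \<partial>lborel)"
    by (rule nn_integral_lborel_fold) auto
  also have "\<dots> = (\<integral>\<^sup>+u. ennreal (exp (- u) / 2) * (F u + F (- u)) * indicator {0..} u \<partial>lborel)"
    by (intro nn_integral_cong) (auto simp: distrib_left split: split_indicator)
  finally show ?thesis .
qed

interpretation nu_sym: abs_exponential nu_sym
proof
  fix G :: "real \<Rightarrow> ennreal"
  assume [measurable]: "G \<in> borel_measurable borel"
  have "ennreal (exp (- u) / 2) * (G u + G u) = ennreal (exp (- u)) * G u" for u :: real
  proof -
    have "ennreal (exp (- u) / 2) * 2 = ennreal (exp (- u) / 2) * ennreal 2" by simp
    also have "\<dots> = ennreal (exp (- u) / 2 * 2)" using ennreal_mult[of "exp (- u) / 2" 2] by simp
    finally have "ennreal (exp (- u) / 2) * 2 = ennreal (exp (- u))" by simp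
    then show ?thesis by (metis mult.assoc mult_2 distrib_left)
  qed
  then show "(\<integral>\<^sup>+x. G \<bar>x\<bar> \<partial>nu_sym) = (\<integral>\<^sup>+u. ennreal (exp (- u)) * indicator {0..} u * G u \<partial>lborel)"
    by (subst nn_integral_nu_sym) (auto intro!: nn_integral_cong split: split_indicator)
qed simp

lemma laplace_nu_plus:
  fixes t :: real
  assumes "t < 1"
  shows "(\<integral>\<^sup>+x. ennreal (exp (x * t)) \<partial>nu_plus) = ennreal (1 / (1 - t))"
proof -
  have "(\<integral>\<^sup>+x. ennreal (exp (x * t)) \<partial>nu_plus) = (\<integral>\<^sup>+x. ennreal (exp (0 - (1 - t) * x)) * indicator {0..} x \<partial>lborel)"
    unfolding nu_plus_def
    by (subst nn_integral_density)
      (auto intro!: nn_integral_cong simp: ennreal_mult'[symmetric] mult_exp_exp algebra_simps split: split_indicator)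
  also have "\<dots> = ennreal (1 / (1 - t))"
    using assms by (subst nn_integral_exp_affine_atLeast) auto
  finally show ?thesis .
qed

lemma laplace_nu_sym:
  fixes t :: real
  assumes "\<bar>t\<bar> < 1"
  shows "(\<integral>\<^sup>+x. ennreal (exp (x * t)) \<partial>nu_sym) = ennreal (1 / (1 - t\<^sup>2))"
proof -
  have integrand: "ennreal (exp (- u) / 2) * (ennreal (exp (u * t)) + ennreal (exp (- (u * t)))) * indicator {0..} u
      = ennreal (exp (- ln 2 - (1 - t) * u)) * indicator {0..} u + ennreal (exp (- ln 2 - (1 + t) * u)) * indicator {0..} u"
    for u
    by (simp add: distrib_left distrib_right ennreal_mult'[symmetric] exp_diff exp_minus mult_exp_exp[symmetric]
        field_simps del: ennreal_mult')
  have "(\<integral>\<^sup>+x. ennreal (exp (x * t)) \<partial>nu_sym)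
      = (\<integral>\<^sup>+u. ennreal (exp (- u) / 2) * (ennreal (exp (u * t)) + ennreal (exp (- (u * t)))) * indicator {0..} u \<partial>lborel)"
    by (subst nn_integral_nu_sym) auto
  also have "\<dots> = (\<integral>\<^sup>+u. ennreal (exp (- ln 2 - (1 - t) * u)) * indicator {0..} u
          + ennreal (exp (- ln 2 - (1 + t) * u)) * indicator {0..} u \<partial>lborel)"
    by (simp only: integrand)
  also have "\<dots> = ennreal (exp (- ln 2) / (1 - t)) + ennreal (exp (- ln 2) / (1 + t))"
    using assms by (subst nn_integral_add) (auto simp: nn_integral_exp_affine_atLeast)
  also have "\<dots> = ennreal (1 / (1 - t\<^sup>2))"
  proof -
    have "1 - t \<noteq> 0" "1 + t \<noteq> 0" "1 - t\<^sup>2 \<noteq> 0" using assms abs_square_less_1[of t] by auto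
    then have "exp (- ln 2) / (1 - t) + exp (- ln 2) / (1 + t) = 1 / (1 - t\<^sup>2)"
      by (simp add: exp_minus field_simps power2_eq_square)
    then show ?thesis
      using assms by (simp add: ennreal_plus[symmetric] del: ennreal_plus)
  qed
  finally show ?thesis .
qed

lemma finite_measure_nu_plus: "finite_measure nu_plus"
  using laplace_nu_plus[of 0] by (intro finite_measureI) simp

lemma finite_measure_nu_sym: "finite_measure nu_sym"
  using laplace_nu_sym[of 0] by (intro finite_measureI) simp

lemma laplace_symmetrize_nu_plus:
  fixes t :: real
  assumes "\<bar>t\<bar> < 1"
  shows "(\<integral>\<^sup>+x. ennreal (exp (x * t)) \<partial>symmetrize nu_plus) = ennreal (1 / (1 - t\<^sup>2))"
proof -
  have "(\<integral>\<^sup>+x. ennreal (exp (x * t)) \<partial>symmetrize nu_plus) = ennreal (1 / (1 - t)) * ennreal (1 / (1 - - t))"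
    using assms by (subst laplace_symmetrize[OF finite_measure_nu_plus sets_nu_plus], subst (1 2) laplace_nu_plus) auto
  then show ?thesis
    using assms by (simp add: ennreal_mult'[symmetric] power2_eq_square algebra_simps del: ennreal_mult')
qed

lemma laplace_symmetrize_nu_sym:
  fixes t :: real
  assumes "\<bar>t\<bar> < 1"
  shows "(\<integral>\<^sup>+x. ennreal (exp (x * t)) \<partial>symmetrize nu_sym) = ennreal (1 / (1 - t\<^sup>2)\<^sup>2)"
proof -
  have "(\<integral>\<^sup>+x. ennreal (exp (x * t)) \<partial>symmetrize nu_sym) = ennreal (1 / (1 - t\<^sup>2)) * ennreal (1 / (1 - (- t)\<^sup>2))"
    using assms by (subst laplace_symmetrize[OF finite_measure_nu_sym sets_nu_sym], subst (1 2) laplace_nu_sym) auto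
  then show ?thesis
    using assms abs_square_less_1[of t] by (simp add: ennreal_mult'[symmetric] power2_eq_square del: ennreal_mult')
qed

lemma log_laplace_le:
  assumes "(\<integral>\<^sup>+x. ennreal (exp (inner x y)) \<partial>\<mu>) \<le> ennreal K" "0 < K"
  shows "log_laplace \<mu> y \<le> ereal (ln K)"
proof -
  let ?I = "\<integral>\<^sup>+x. ennreal (exp (inner x y)) \<partial>\<mu>"
  have finite: "?I \<noteq> \<infinity>" using assms(1) by (auto simp: top_unique)
  show ?thesis
  proof (cases "?I = 0")
    case True
    then show ?thesis by (simp add: log_laplace_def ln_ennreal_def)
  next
    case False
    then have "0 < enn2real ?I"
      using finite by (simp add: enn2real_positive_iff less_top zero_less_iff_neq_zero)
    moreover have "enn2real ?I \<le> K" using assms by (simp add: enn2real_leI)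
    ultimately have "ln (enn2real ?I) \<le> ln K" by simp
    then show ?thesis using False finite by (simp add: log_laplace_def ln_ennreal_def)
  qed
qed

definition log_laplace_bound :: "real \<Rightarrow> real" where
  "log_laplace_bound t = - ln ((1 - t\<^sup>2)\<^sup>2)"

lemma log_laplace_bound_nonneg: "\<bar>t\<bar> < 1 \<Longrightarrow> 0 \<le> log_laplace_bound t"
  using abs_square_less_1[of t] by (simp add: log_laplace_bound_def power_le_one)

lemma cramer_ge_affine:
  fixes \<mu> :: "real measure"
  assumes "(\<integral>\<^sup>+x. ennreal (exp (x * t)) \<partial>\<mu>) \<le> ennreal (1 / (1 - t\<^sup>2)\<^sup>2)" "\<bar>t\<bar> < 1"
  shows "ereal (z * t - log_laplace_bound t) \<le> cramer \<mu> z"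
proof -
  have pos: "0 < 1 - t\<^sup>2" using assms(2) abs_square_less_1[of t] by simp
  have "log_laplace \<mu> t \<le> ereal (ln (1 / (1 - t\<^sup>2)\<^sup>2))"
    by (rule log_laplace_le) (use assms pos in auto)
  also have "ln (1 / (1 - t\<^sup>2)\<^sup>2) = log_laplace_bound t"
    using pos by (simp add: log_laplace_bound_def ln_div)
  finally have "ereal (z * t - log_laplace_bound t) \<le> ereal (inner z t) - log_laplace \<mu> t"
    by (cases "log_laplace \<mu> t") auto
  also have "\<dots> \<le> cramer \<mu> z" unfolding cramer_def by (rule SUP_upper) simp
  finally show ?thesis .
qed

definition test_shift :: real where "test_shift = ln 10"
definition test_slope :: real where "test_slope = 5/6"
definition test_cap :: real where "test_cap = 10^14"

definition test_fun :: "real \<Rightarrow> real" where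
  "test_fun y = min (test_slope * max (\<bar>y\<bar> - test_shift) 0) test_cap"

lemma test_fun_measurable [measurable]: "test_fun \<in> borel_measurable borel"
  unfolding test_fun_def by measurable

lemma bounded_range_test_fun: "bounded (range test_fun)"
proof -
  have "norm (test_fun y) \<le> test_cap" for y
    by (simp add: test_fun_def test_cap_def test_slope_def)
  then show ?thesis by (auto simp: bounded_iff)
qed

lemma inf_conv_test_fun_ge:
  fixes \<mu> :: "real measure"
  assumes laplace: "\<And>t. \<bar>t\<bar> < 1 \<Longrightarrow> (\<integral>\<^sup>+x. ennreal (exp (x * t)) \<partial>\<mu>) \<le> ennreal (1 / (1 - t\<^sup>2)\<^sup>2)"
    and t: "0 \<le> t" "t \<le> test_slope"
    and below_cap: "t * (\<bar>x\<bar> - test_shift) - log_laplace_bound t \<le> test_cap"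
  shows "ereal (t * (\<bar>x\<bar> - test_shift) - log_laplace_bound t) \<le> inf_conv (\<lambda>z. cramer \<mu> (z /\<^sub>R 1)) test_fun x"
  unfolding inf_conv_def
proof (rule INF_greatest)
  fix y :: real
  have "\<bar>t\<bar> < 1" using t by (simp add: test_slope_def)
  \<comment> \<open>the slope is taken with the sign of \<open>x\<close>, so that \<open>x \<sigma> = t |x|\<close> and \<open>y \<sigma> \<le> t |y|\<close>\<close>
  define \<sigma> where "\<sigma> = (if 0 \<le> x then t else - t)"
  have "\<bar>\<sigma>\<bar> < 1" using \<open>\<bar>t\<bar> < 1\<close> by (simp add: \<sigma>_def)
  have "log_laplace_bound \<sigma> = log_laplace_bound t" by (simp add: \<sigma>_def log_laplace_bound_def)
  then have W_ge: "ereal ((x - y) * \<sigma> - log_laplace_bound t) \<le> cramer \<mu> (x - y)"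
    using cramer_ge_affine[OF laplace[OF \<open>\<bar>\<sigma>\<bar> < 1\<close>] \<open>\<bar>\<sigma>\<bar> < 1\<close>, of "x - y"] by simp
  have W_nonneg: "ereal 0 \<le> cramer \<mu> (x - y)"
    using cramer_ge_affine[OF laplace[of 0], of "x - y"] by (simp add: log_laplace_bound_def)
  have "x * \<sigma> = t * \<bar>x\<bar>" "y * \<sigma> \<le> t * \<bar>y\<bar>"
    using t by (auto simp: \<sigma>_def abs_if mult_nonneg_nonpos)
  show "ereal (t * (\<bar>x\<bar> - test_shift) - log_laplace_bound t) \<le> cramer \<mu> ((x - y) /\<^sub>R 1) + ereal (test_fun y)"
  proof (cases "test_fun y = test_cap")
    case True
    then have "ereal (t * (\<bar>x\<bar> - test_shift) - log_laplace_bound t) \<le> ereal 0 + ereal (test_fun y)"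
      using below_cap by simp
    also have "\<dots> \<le> cramer \<mu> (x - y) + ereal (test_fun y)" by (rule add_right_mono[OF W_nonneg])
    finally show ?thesis by simp
  next
    case False
    then have "test_fun y = test_slope * max (\<bar>y\<bar> - test_shift) 0"
      by (auto simp: test_fun_def min_def split: if_splits)
    moreover have "t * (\<bar>y\<bar> - test_shift) \<le> t * max (\<bar>y\<bar> - test_shift) 0"
      using t by (intro mult_left_mono) auto
    moreover have "\<dots> \<le> test_slope * max (\<bar>y\<bar> - test_shift) 0"
      using t by (intro mult_right_mono) auto
    ultimately have "t * (\<bar>x\<bar> - test_shift) - log_laplace_bound t \<le> (x - y) * \<sigma> - log_laplace_bound t + test_fun y"
      using \<open>x * \<sigma> = t * \<bar>x\<bar>\<close> \<open>y * \<sigma> \<le> t * \<bar>y\<bar>\<close> by (simp add: algebra_simps)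
    then have "ereal (t * (\<bar>x\<bar> - test_shift) - log_laplace_bound t)
        \<le> ereal ((x - y) * \<sigma> - log_laplace_bound t) + ereal (test_fun y)"
      by simp
    also have "\<dots> \<le> cramer \<mu> (x - y) + ereal (test_fun y)" by (rule add_right_mono[OF W_ge])
    finally show ?thesis by simp
  qed
qed

lemma ennreal_exp_le_exp_ereal: "ereal v \<le> z \<Longrightarrow> ennreal (exp v) \<le> exp_ereal z"
  by (cases z) (auto simp: exp_ereal_def)

lemma sum_indicator_steps_le:
  fixes b :: "nat \<Rightarrow> real" and g :: "nat \<Rightarrow> ennreal"
  assumes "incseq b" and "\<And>i. i < n \<Longrightarrow> b i \<le> u \<Longrightarrow> u < b (Suc i) \<Longrightarrow> g i \<le> F"
  shows "(\<Sum>i<n. g i * indicator {b i..<b (Suc i)} u) \<le> F"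
  using assms(2)
proof (induction n)
  case 0
  then show ?case by simp
next
  case (Suc n)
  show ?case
  proof (cases "b n \<le> u")
    case True
    have "(\<Sum>i<n. g i * indicator {b i..<b (Suc i)} u) = 0"
    proof (intro sum.neutral ballI)
      fix i assume "i \<in> {..<n}"
      then have "b (Suc i) \<le> b n" using \<open>incseq b\<close> by (auto simp: incseq_def)
      then show "g i * indicator {b i..<b (Suc i)} u = 0" using True by (auto split: split_indicator)
    qed
    then show ?thesis using Suc.prems[of n] by (auto split: split_indicator)
  next
    case False
    then show ?thesis using Suc by (simp split: split_indicator)
  qed
qed

lemma exp_slope_breakpoint:
  fixes r E t :: real and k m :: nat
  assumes "0 < r" "0 < E" "(1 - t) * real m = 1"
  shows "exp (- t * ln 10 + ln E - (1 - t) * ln (10 * r ^ (k * m))) = E / (10 * r ^ k)"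
proof -
  have "(1 - t) * ln (10 * r ^ (k * m)) = (1 - t) * ln 10 + ((1 - t) * real m) * (real k * ln r)"
    using assms by (simp add: ln_mult ln_realpow algebra_simps)
  also have "\<dots> = (1 - t) * ln 10 + real k * ln r" using assms(3) by simp
  finally have exponent: "- t * ln 10 + ln E - (1 - t) * ln (10 * r ^ (k * m)) = ln E - ln 10 - real k * ln r"
    by (simp add: algebra_simps)
  show ?thesis
    unfolding exponent using assms by (simp add: exp_diff ln_realpow[symmetric])
qed

definition step_slope :: "nat \<Rightarrow> real" where
  "step_slope i = 1 - 1 / real (Suc i)"

text \<open>For \<open>1 \<le> i \<le> 5\<close> breakpoint \<open>i\<close> is \<open>ln (10 r\<^sup>i\<^sup>(\<^sup>i\<^sup>+\<^sup>1\<^sup>))\<close> with rational \<open>r\<close>, so that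
  \<open>exp (- t ln 10 - (1 - t) b)\<close> is rational for both adjacent slopes \<open>t = 1 - 1/i\<close> and
  \<open>t = 1 - 1/(i+1)\<close>.\<close>

definition step_base :: "nat \<Rightarrow> real" where
  "step_base i = (if i = 1 then 7/4 else if i = 2 then 11/6 else if i = 3 then 8/5 else if i = 4 then 3/2 else 7/5)"

definition breakpoint :: "nat \<Rightarrow> real" where
  "breakpoint i = (if i = 0 then 0 else if i \<le> 5 then ln (10 * step_base i ^ (i * Suc i)) else ln (10 * 100 ^ 6))"

lemma breakpoint_incseq: "incseq breakpoint"
proof (rule incseq_SucI)
  fix i :: nat
  consider "i = 0" | "i = 1" | "i = 2" | "i = 3" | "i = 4" | "i = 5" | "6 \<le> i" by linarith
  then show "breakpoint i \<le> breakpoint (Suc i)"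
    by cases (simp_all add: breakpoint_def step_base_def power_divide)
qed

lemma breakpoint_nonneg: "0 \<le> breakpoint i"
  using incseqD[OF breakpoint_incseq, of 0 i] by (simp add: breakpoint_def)

lemma breakpoint_less_cap:
  assumes "i \<le> 6"
  shows "breakpoint i < test_cap"
proof -
  have "breakpoint i \<le> breakpoint 6" using assms breakpoint_incseq by (simp add: incseq_def)
  also have "\<dots> < 10 * 100 ^ 6" by (simp add: breakpoint_def ln_less_self)
  also have "\<dots> < test_cap" by (simp add: test_cap_def)
  finally show ?thesis .
qed

lemma step_slope_bounds:
  assumes "i < 6"
  shows "0 \<le> step_slope i" "step_slope i \<le> test_slope" "step_slope i < 1"
  using assms by (auto simp: step_slope_def test_slope_def field_simps)

text \<open>The integral of \<open>exp (t (|x| - ln 10)) (1 - t\<^sup>2)\<^sup>2\<close>, with \<open>t = step_slope i\<close>, over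
  \<open>breakpoint i \<le> |x| < breakpoint (i + 1)\<close> under the exponential law of \<open>|x|\<close>.\<close>

definition step_integral :: "nat \<Rightarrow> real" where
  "step_integral i =
    (exp (- step_slope i * test_shift - log_laplace_bound (step_slope i) - (1 - step_slope i) * breakpoint i)
   - exp (- step_slope i * test_shift - log_laplace_bound (step_slope i) - (1 - step_slope i) * breakpoint (Suc i)))
    / (1 - step_slope i)"

lemma step_integral_nonneg:
  assumes "i < 6"
  shows "0 \<le> step_integral i"
proof -
  have "(1 - step_slope i) * breakpoint i \<le> (1 - step_slope i) * breakpoint (Suc i)"
    using step_slope_bounds[OF assms] breakpoint_incseq by (intro mult_left_mono) (auto simp: incseq_SucD)
  then show ?thesis
    using step_slope_bounds[OF assms] unfolding step_integral_def by (intro divide_nonneg_pos) auto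
qed

lemma exp_step_term:
  assumes "0 < r"
  shows "exp (- step_slope i * test_shift - log_laplace_bound (step_slope i)
      - (1 - step_slope i) * ln (10 * r ^ (k * Suc i)))
    = (1 - (step_slope i)\<^sup>2)\<^sup>2 / (10 * r ^ k)"
proof -
  have "\<bar>step_slope i\<bar> < 1" by (simp add: step_slope_def field_simps)
  then have "(step_slope i)\<^sup>2 < 1" by (simp add: abs_square_less_1)
  then have "0 < (1 - (step_slope i)\<^sup>2)\<^sup>2" by simp
  moreover have "(1 - step_slope i) * real (Suc i) = 1" by (simp add: step_slope_def field_simps)
  moreover have "- step_slope i * test_shift - log_laplace_bound (step_slope i)
      = - step_slope i * ln 10 + ln ((1 - (step_slope i)\<^sup>2)\<^sup>2)"
    by (simp add: test_shift_def log_laplace_bound_def)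
  ultimately show ?thesis
    using exp_slope_breakpoint[OF assms] by presburger
qed

lemma exp_step_at_breakpoint:
  assumes "1 \<le> i" "i \<le> 5"
  shows "exp (- step_slope i * test_shift - log_laplace_bound (step_slope i) - (1 - step_slope i) * breakpoint i)
    = (1 - (step_slope i)\<^sup>2)\<^sup>2 / (10 * step_base i ^ i)"
  using assms exp_step_term[of "step_base i" i i] by (simp add: breakpoint_def step_base_def)

lemma exp_step_at_next_breakpoint:
  assumes "i \<le> 4"
  shows "exp (- step_slope i * test_shift - log_laplace_bound (step_slope i) - (1 - step_slope i) * breakpoint (Suc i))
    = (1 - (step_slope i)\<^sup>2)\<^sup>2 / (10 * step_base (Suc i) ^ Suc (Suc i))"
  using assms exp_step_term[of "step_base (Suc i)" i "Suc (Suc i)"]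
  by (simp add: breakpoint_def step_base_def mult.commute[of "Suc i"])

lemma step_integral_eq:
  assumes "1 \<le> i" "i \<le> 4"
  shows "step_integral i = ((1 - (step_slope i)\<^sup>2)\<^sup>2 / (10 * step_base i ^ i)
    - (1 - (step_slope i)\<^sup>2)\<^sup>2 / (10 * step_base (Suc i) ^ Suc (Suc i))) / (1 - step_slope i)"
proof -
  have "i \<le> 5" using assms by simp
  show ?thesis
    unfolding step_integral_def exp_step_at_breakpoint[OF assms(1) \<open>i \<le> 5\<close>] exp_step_at_next_breakpoint[OF assms(2)] ..
qed

lemma step_integral_sum: "(\<Sum>i<6. step_integral i) = 1635671815787308601 / 1558592266936320000"
proof -
  have first: "step_integral 0 = (1 - (1 - (step_slope 0)\<^sup>2)\<^sup>2 / (10 * step_base 1 ^ 2)) / (1 - step_slope 0)"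
    using exp_step_at_next_breakpoint[of 0]
    by (simp add: step_integral_def step_slope_def breakpoint_def log_laplace_bound_def numeral_2_eq_2)
  have "exp (- step_slope 5 * test_shift - log_laplace_bound (step_slope 5) - (1 - step_slope 5) * breakpoint 6)
      = (1 - (step_slope 5)\<^sup>2)\<^sup>2 / (10 * 100 ^ 1)"
    using exp_step_term[of 100 5 1] by (simp add: breakpoint_def)
  moreover have "exp (- step_slope 5 * test_shift - log_laplace_bound (step_slope 5) - (1 - step_slope 5) * breakpoint 5)
      = (1 - (step_slope 5)\<^sup>2)\<^sup>2 / (10 * step_base 5 ^ 5)"
    by (rule exp_step_at_breakpoint) simp_all
  ultimately have last: "step_integral 5 = ((1 - (step_slope 5)\<^sup>2)\<^sup>2 / (10 * step_base 5 ^ 5)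
      - (1 - (step_slope 5)\<^sup>2)\<^sup>2 / (10 * 100 ^ 1)) / (1 - step_slope 5)"
    unfolding step_integral_def by simp
  have "(\<Sum>i<6. step_integral i) = step_integral 0 + step_integral 1 + step_integral 2
      + step_integral 3 + step_integral 4 + step_integral 5"
    by (simp add: eval_nat_numeral)
  then show ?thesis
    by (simp add: first last step_integral_eq step_slope_def step_base_def power_divide)
qed

context abs_exponential
begin

lemma nn_integral_exp_abs_Ico:
  assumes "0 \<le> p" "p \<le> q" "t < 1"
  shows "(\<integral>\<^sup>+x. ennreal (exp (t * \<bar>x\<bar> + d)) * indicator {p..<q} \<bar>x\<bar> \<partial>\<mu>)
    = ennreal ((exp (d - (1 - t) * p) - exp (d - (1 - t) * q)) / (1 - t))"
proof -
  have "(\<integral>\<^sup>+x. ennreal (exp (t * \<bar>x\<bar> + d)) * indicator {p..<q} \<bar>x\<bar> \<partial>\<mu>)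
      = (\<integral>\<^sup>+u. ennreal (exp (- u)) * indicator {0..} u * (ennreal (exp (t * u + d)) * indicator {p..<q} u) \<partial>lborel)"
    by (rule nn_integral_abs) measurable
  also have "\<dots> = (\<integral>\<^sup>+u. ennreal (exp (d - (1 - t) * u)) * indicator {p..<q} u \<partial>lborel)"
    using assms(1)
    by (intro nn_integral_cong)
      (auto simp: ennreal_mult'[symmetric] mult_exp_exp algebra_simps split: split_indicator simp del: ennreal_mult')
  also have "\<dots> = ennreal ((exp (d - (1 - t) * p) - exp (d - (1 - t) * q)) / (1 - t))"
    using assms by (intro nn_integral_exp_affine_Ico) auto
  finally show ?thesis .
qed

lemma nn_integral_exp_abs_atLeast:
  assumes "0 \<le> p" "t < 1"
  shows "(\<integral>\<^sup>+x. ennreal (exp (t * \<bar>x\<bar> + d)) * indicator {p..} \<bar>x\<bar> \<partial>\<mu>) = ennreal (exp (d - (1 - t) * p) / (1 - t))"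
proof -
  have "(\<integral>\<^sup>+x. ennreal (exp (t * \<bar>x\<bar> + d)) * indicator {p..} \<bar>x\<bar> \<partial>\<mu>)
      = (\<integral>\<^sup>+u. ennreal (exp (- u)) * indicator {0..} u * (ennreal (exp (t * u + d)) * indicator {p..} u) \<partial>lborel)"
    by (rule nn_integral_abs) measurable
  also have "\<dots> = (\<integral>\<^sup>+u. ennreal (exp (d - (1 - t) * u)) * indicator {p..} u \<partial>lborel)"
    using assms(1)
    by (intro nn_integral_cong)
      (auto simp: ennreal_mult'[symmetric] mult_exp_exp algebra_simps split: split_indicator simp del: ennreal_mult')
  also have "\<dots> = ennreal (exp (d - (1 - t) * p) / (1 - t))"
    using assms by (intro nn_integral_exp_affine_atLeast) auto
  finally show ?thesis .
qed

lemma nn_integral_exp_minus_test_fun_ge: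
  "ennreal (9/10 + 6/110) \<le> (\<integral>\<^sup>+x. ennreal (exp (- test_fun x)) \<partial>\<mu>)"
proof -
  let ?g = "\<lambda>x. ennreal (exp (0 * \<bar>x\<bar> + 0)) * indicator {0..<test_shift} \<bar>x\<bar>
    + ennreal (exp (- test_slope * \<bar>x\<bar> + test_slope * test_shift)) * indicator {test_shift..} \<bar>x\<bar>"
  have "0 < test_shift" by (simp add: test_shift_def)
  have "(\<integral>\<^sup>+x. ?g x \<partial>\<mu>)
      = (\<integral>\<^sup>+x. ennreal (exp (0 * \<bar>x\<bar> + 0)) * indicator {0..<test_shift} \<bar>x\<bar> \<partial>\<mu>)
      + (\<integral>\<^sup>+x. ennreal (exp (- test_slope * \<bar>x\<bar> + test_slope * test_shift)) * indicator {test_shift..} \<bar>x\<bar> \<partial>\<mu>)"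
    by (rule nn_integral_add) measurable
  also have "\<dots> = ennreal ((exp (0 - (1 - 0) * 0) - exp (0 - (1 - 0) * test_shift)) / (1 - 0))
      + ennreal (exp (test_slope * test_shift - (1 - - test_slope) * test_shift) / (1 - - test_slope))"
    using \<open>0 < test_shift\<close>
    by (intro arg_cong2[where f = "(+)"] nn_integral_exp_abs_Ico nn_integral_exp_abs_atLeast)
      (auto simp: test_slope_def)
  also have "\<dots> = ennreal (1 - exp (- test_shift)) + ennreal (exp (- test_shift) / (11/6))"
    by (simp add: test_slope_def algebra_simps)
  also have "\<dots> = ennreal (9/10 + 6/110)"
    by (simp add: test_shift_def exp_minus ennreal_plus[symmetric] del: ennreal_plus)
  finally have "(\<integral>\<^sup>+x. ?g x \<partial>\<mu>) = ennreal (9/10 + 6/110)" .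
  moreover have "?g x \<le> ennreal (exp (- test_fun x))" for x
  proof (cases "\<bar>x\<bar> < test_shift")
    case True
    then have "test_fun x = 0" by (simp add: test_fun_def test_cap_def)
    then show ?thesis using True by (simp split: split_indicator)
  next
    case False
    have "test_fun x \<le> test_slope * (\<bar>x\<bar> - test_shift)"
      using False by (simp add: test_fun_def)
    then show ?thesis using False by (simp split: split_indicator add: algebra_simps)
  qed
  then have "(\<integral>\<^sup>+x. ?g x \<partial>\<mu>) \<le> (\<integral>\<^sup>+x. ennreal (exp (- test_fun x)) \<partial>\<mu>)"
    by (intro nn_integral_mono)
  ultimately show ?thesis by simp
qed

lemma nn_integral_exp_inf_conv_test_fun_ge:
  fixes \<mu>' :: "real measure"
  assumes laplace: "\<And>t. \<bar>t\<bar> < 1 \<Longrightarrow> (\<integral>\<^sup>+x. ennreal (exp (x * t)) \<partial>\<mu>') \<le> ennreal (1 / (1 - t\<^sup>2)\<^sup>2)"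
  shows "ennreal (1635671815787308601 / 1558592266936320000)
    \<le> (\<integral>\<^sup>+x. exp_ereal (inf_conv (\<lambda>z. cramer \<mu>' (z /\<^sub>R 1)) test_fun x) \<partial>\<mu>)"
proof -
  define d where "d i = - step_slope i * test_shift - log_laplace_bound (step_slope i)" for i
  let ?g = "\<lambda>i x. ennreal (exp (step_slope i * \<bar>x\<bar> + d i)) * indicator {breakpoint i..<breakpoint (Suc i)} \<bar>x\<bar>"
  have "(\<integral>\<^sup>+x. (\<Sum>i<6. ?g i x) \<partial>\<mu>) = (\<Sum>i<6. \<integral>\<^sup>+x. ?g i x \<partial>\<mu>)"
    by (rule nn_integral_sum) measurable
  also have "\<dots> = (\<Sum>i<6. ennreal (step_integral i))"
  proof (rule sum.cong)
    fix i assume "i \<in> {..<6::nat}"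
    then show "(\<integral>\<^sup>+x. ?g i x \<partial>\<mu>) = ennreal (step_integral i)"
      unfolding step_integral_def d_def
      using step_slope_bounds breakpoint_nonneg breakpoint_incseq
      by (intro nn_integral_exp_abs_Ico) (auto simp: incseq_SucD)
  qed simp
  also have "\<dots> = ennreal (\<Sum>i<6. step_integral i)"
    by (rule sum_ennreal) (use step_integral_nonneg in auto)
  also have "\<dots> = ennreal (1635671815787308601 / 1558592266936320000)"
    by (simp only: step_integral_sum)
  finally have "(\<integral>\<^sup>+x. (\<Sum>i<6. ?g i x) \<partial>\<mu>) = ennreal (1635671815787308601 / 1558592266936320000)" .
  moreover have "(\<Sum>i<6. ?g i x) \<le> exp_ereal (inf_conv (\<lambda>z. cramer \<mu>' (z /\<^sub>R 1)) test_fun x)" for x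
  proof (rule sum_indicator_steps_le[OF breakpoint_incseq])
    fix i :: nat
    assume i: "i < 6" "breakpoint i \<le> \<bar>x\<bar>" "\<bar>x\<bar> < breakpoint (Suc i)"
    note t = step_slope_bounds[OF \<open>i < 6\<close>]
    have "step_slope i * \<bar>x\<bar> \<le> \<bar>x\<bar>" using t by (intro mult_left_le_one_le) auto
    moreover have "0 \<le> step_slope i * test_shift" using t by (simp add: test_shift_def)
    ultimately have "step_slope i * (\<bar>x\<bar> - test_shift) \<le> \<bar>x\<bar>" by (simp add: right_diff_distrib)
    moreover have "\<bar>x\<bar> < test_cap" using i(3) breakpoint_less_cap[of "Suc i"] i(1) by auto
    moreover have "0 \<le> log_laplace_bound (step_slope i)" using t by (intro log_laplace_bound_nonneg) auto
    ultimately have "step_slope i * (\<bar>x\<bar> - test_shift) - log_laplace_bound (step_slope i) \<le> test_cap"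
      by linarith
    from inf_conv_test_fun_ge[OF laplace t(1,2) this]
    have "ereal (step_slope i * \<bar>x\<bar> + d i) \<le> inf_conv (\<lambda>z. cramer \<mu>' (z /\<^sub>R 1)) test_fun x"
      by (simp add: d_def algebra_simps)
    then show "ennreal (exp (step_slope i * \<bar>x\<bar> + d i)) \<le> exp_ereal (inf_conv (\<lambda>z. cramer \<mu>' (z /\<^sub>R 1)) test_fun x)"
      by (rule ennreal_exp_le_exp_ereal)
  qed
  then have "(\<integral>\<^sup>+x. (\<Sum>i<6. ?g i x) \<partial>\<mu>) \<le> (\<integral>\<^sup>+x. exp_ereal (inf_conv (\<lambda>z. cramer \<mu>' (z /\<^sub>R 1)) test_fun x) \<partial>\<mu>)"
    by (intro nn_integral_mono)
  ultimately show ?thesis by simp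
qed

lemma not_IC_1:
  assumes "\<And>t. \<bar>t\<bar> < 1 \<Longrightarrow> (\<integral>\<^sup>+x. ennreal (exp (x * t)) \<partial>symmetrize \<mu>) \<le> ennreal (1 / (1 - t\<^sup>2)\<^sup>2)"
  shows "\<not> IC \<mu> 1"
proof
  assume "IC \<mu> 1"
  then have tau: "(\<integral>\<^sup>+x. exp_ereal (inf_conv (\<lambda>z. cramer (symmetrize \<mu>) (z /\<^sub>R 1)) test_fun x) \<partial>\<mu>)
      * (\<integral>\<^sup>+x. ennreal (exp (- test_fun x)) \<partial>\<mu>) \<le> 1"
    unfolding IC_def property_tau_def using bounded_range_test_fun by simp
  have "ennreal (1635671815787308601 / 1558592266936320000) * ennreal (9/10 + 6/110)
      \<le> (\<integral>\<^sup>+x. exp_ereal (inf_conv (\<lambda>z. cramer (symmetrize \<mu>) (z /\<^sub>R 1)) test_fun x) \<partial>\<mu>)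
      * (\<integral>\<^sup>+x. ennreal (exp (- test_fun x)) \<partial>\<mu>)"
    by (intro mult_mono nn_integral_exp_inf_conv_test_fun_ge nn_integral_exp_minus_test_fun_ge assms) simp_all
  also note tau
  finally have "ennreal (1635671815787308601 / 1558592266936320000 * (9/10 + 6/110)) \<le> 1"
    by (simp add: ennreal_mult'[symmetric])
  then show False by (simp add: ennreal_le_1)
qed

end

theorem theorem3:
  shows "\<not> IC nu_plus 1 \<and> \<not> IC nu_sym 1"
proof
  show "\<not> IC nu_plus 1"
  proof (rule nu_plus.not_IC_1)
    fix t :: real
    assume "\<bar>t\<bar> < 1"
    then have "0 < 1 - t\<^sup>2" "1 - t\<^sup>2 \<le> 1" using abs_square_less_1[of t] by auto
    then have "1 / (1 - t\<^sup>2) \<le> 1 / (1 - t\<^sup>2)\<^sup>2"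
      by (intro divide_left_mono) (auto simp: power2_eq_square mult_left_le_one_le)
    then show "(\<integral>\<^sup>+x. ennreal (exp (x * t)) \<partial>symmetrize nu_plus) \<le> ennreal (1 / (1 - t\<^sup>2)\<^sup>2)"
      using \<open>\<bar>t\<bar> < 1\<close> by (simp add: laplace_symmetrize_nu_plus ennreal_leI)
  qed
  show "\<not> IC nu_sym 1"
    by (rule nu_sym.not_IC_1) (simp add: laplace_symmetrize_nu_sym)
qed

end
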